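(* Let $j^\star=\left\lfloor-\frac{\log(1-\lambda)}{\log(\lambda d+1)}\right\rfloor$, assume $I>j^\star$, and let $x^\star$ be the unique fixed point. Then $\mathcal L_M(x^\star)=\mathcal L_S(x^\star)+\frac1d$ and $$j^\star-\frac1d\le\mathcal L_S(x^\star)\le j^\star-\frac1d+1.$$
   Context: Fix $\lambda\in(0,1)$, an integer $d\ge2$ and an integer $I>1$. $\mathcal S=\{x=(x_{i,j})_{0\le i\le j\le I}: x_{i,j}\ge0,\ \sum_{i=0}^I\sum_{j=i}^I x_{i,j}=1\}$; $x_{i,\cdot}=\sum_{j=i}^I x_{i,j}$, $x_{\cdot,j}=\sum_{i=0}^j x_{i,j}$; $\mathcal L_S(x)=\sum_{i=1}^I i\,x_{i,\cdot}$, $\mathcal L_M(x)=\sum_{j=1}^I j\,x_{\cdot,j}$. For $0\le j\le I$: $\mathcal R_j(x)=\max\{0,\lambda(1-d\sum_{i=0}^j(j+1-i)x_{i,\cdot})\}\,\mathbf 1\{\sum_{i=0}^j x_{\cdot,i}=0\}$, $\mathcal G_j(x)=\lambda d\,\mathbf 1\{\sum_{i=0}^j x_{\cdot,i}=0,\ d\sum_{i=0}^j(j+1-i)x_{i,\cdot}\le1\}\sum_{i=0}^j x_{i,\cdot}$. Write $\rho_k^{a,b}(x)=\mathcal R_k(x)\frac{x_{a,b}}{x_{\cdot,b}}\mathbf 1\{x_{\cdot,b}>0\}$ (equal to $0$ when $x_{\cdot,b}=0$). The drift $b(x)$ is: $b_{0,0}=\lambda d(x_{0,\cdot}-x_{0,0})-\lambda+\mathcal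 R_0(x)$; for $i<j$: $b_{i,j}=x_{i+1,j}-\mathbf 1\{i>0\}x_{i,j}-\lambda d x_{i,j}-\rho_{j-1}^{i,j}+\mathbf 1\{i>0\}\rho_{j-2}^{i-1,j-1}+\mathbf 1\{j=I,i>0\}\rho_{I-1}^{i-1,I}$; $b_{1,1}=-x_{1,1}+\lambda d(x_{1,\cdot}-x_{1,1})+\lambda-\mathcal R_0(x)-\rho_0^{1,1}-\mathcal G_1(x)$; for $2\le i\le I-1$: $b_{i,i}=-x_{i,i}+\lambda d(x_{i,\cdot}-x_{i,i})-\rho_{i-1}^{i,i}+\rho_{i-2}^{i-1,i-1}+\mathcal G_{i-1}(x)-\mathcal G_i(x)$; $b_{I,I}=-x_{I,I}+\rho_{I-2}^{I-1,I-1}+\mathcal G_{I-1}(x)+\rho_{I-1}^{I-1,I}$. A fluid solution is an absolutely continuous $x:\mathbb R_+\to\mathcal S$ with $\dot x_{i,j}(t)=b_{i,j}(x(t))$ for a.e. $t$ and all $i\le j$. A fixed point is a fluid solution with $b(x(t))=0$ for all $t\ge0$ (hence constant, identified with a point of $\mathcal S$). *)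

theory Defs
  imports Complex_Main
begin

text \<open>States are functions x :: nat => nat => real; only the entries x i j with
  0 <= i <= j <= I are meaningful.\<close>

definition inS :: "nat \<Rightarrow> (nat \<Rightarrow> nat \<Rightarrow> real) \<Rightarrow> bool" where
  "inS I x \<longleftrightarrow> (\<forall>i j. i \<le> j \<longrightarrow> j \<le> I \<longrightarrow> 0 \<le> x i j)
                 \<and> (\<Sum>i=0..I. \<Sum>j=i..I. x i j) = 1"

definition rowsum :: "nat \<Rightarrow> (nat \<Rightarrow> nat \<Rightarrow> real) \<Rightarrow> nat \<Rightarrow> real" where
  "rowsum I x i = (\<Sum>j=i..I. x i j)"

definition colsum :: "(nat \<Rightarrow> nat \<Rightarrow> real) \<Rightarrow> nat \<Rightarrow> real" where
  "colsum x j = (\<Sum>i=0..j. x i j)"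

definition LS :: "nat \<Rightarrow> (nat \<Rightarrow> nat \<Rightarrow> real) \<Rightarrow> real" where
  "LS I x = (\<Sum>i=1..I. real i * rowsum I x i)"

definition LM :: "nat \<Rightarrow> (nat \<Rightarrow> nat \<Rightarrow> real) \<Rightarrow> real" where
  "LM I x = (\<Sum>j=1..I. real j * colsum x j)"

definition Rf :: "real \<Rightarrow> nat \<Rightarrow> nat \<Rightarrow> (nat \<Rightarrow> nat \<Rightarrow> real) \<Rightarrow> nat \<Rightarrow> real" where
  "Rf lam d I x j =
     (if (\<Sum>i=0..j. colsum x i) = 0
      then max 0 (lam * (1 - real d * (\<Sum>i=0..j. (real j + 1 - real i) * rowsum I x i)))
      else 0)"

definition Gf :: "real \<Rightarrow> nat \<Rightarrow> nat \<Rightarrow> (nat \<Rightarrow> nat \<Rightarrow> real) \<Rightarrow> nat \<Rightarrow> real" where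
  "Gf lam d I x j =
     (if (\<Sum>i=0..j. colsum x i) = 0
         \<and> real d * (\<Sum>i=0..j. (real j + 1 - real i) * rowsum I x i) \<le> 1
      then lam * real d * (\<Sum>i=0..j. rowsum I x i)
      else 0)"

definition rho :: "real \<Rightarrow> nat \<Rightarrow> nat \<Rightarrow> (nat \<Rightarrow> nat \<Rightarrow> real) \<Rightarrow> nat \<Rightarrow> nat \<Rightarrow> nat \<Rightarrow> real" where
  "rho lam d I x k a b =
     (if colsum x b > 0 then Rf lam d I x k * x a b / colsum x b else 0)"

definition drift :: "real \<Rightarrow> nat \<Rightarrow> nat \<Rightarrow> (nat \<Rightarrow> nat \<Rightarrow> real) \<Rightarrow> nat \<Rightarrow> nat \<Rightarrow> real" where
  "drift lam d I x i j =
    (if i = 0 \<and> j = 0 then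
       lam * real d * (rowsum I x 0 - x 0 0) - lam + Rf lam d I x 0
     else if i < j then
       x (i+1) j - (if i > 0 then x i j else 0) - lam * real d * x i j
       - rho lam d I x (j-1) i j
       + (if i > 0 then rho lam d I x (j-2) (i-1) (j-1) else 0)
       + (if j = I \<and> i > 0 then rho lam d I x (I-1) (i-1) I else 0)
     else if i = 1 \<and> j = 1 then
       - x 1 1 + lam * real d * (rowsum I x 1 - x 1 1) + lam - Rf lam d I x 0
       - rho lam d I x 0 1 1 - Gf lam d I x 1
     else if i = j \<and> 2 \<le> i \<and> i \<le> I - 1 then
       - x i i + lam * real d * (rowsum I x i - x i i)
       - rho lam d I x (i-1) i i + rho lam d I x (i-2) (i-1) (i-1)
       + Gf lam d I x (i-1) - Gf lam d I x i
     else if i = I \<and> j = I then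
       - x I I + rho lam d I x (I-2) (I-1) (I-1) + Gf lam d I x (I-1)
       + rho lam d I x (I-1) (I-1) I
     else 0)"

definition fixed_point :: "real \<Rightarrow> nat \<Rightarrow> nat \<Rightarrow> (nat \<Rightarrow> nat \<Rightarrow> real) \<Rightarrow> bool" where
  "fixed_point lam d I x \<longleftrightarrow> inS I x \<and>
     (\<forall>i j. i \<le> j \<longrightarrow> j \<le> I \<longrightarrow> drift lam d I x i j = 0)"

definition jstar :: "real \<Rightarrow> nat \<Rightarrow> int" where
  "jstar lam d = \<lfloor>- ln (1 - lam) / ln (lam * real d + 1)\<rfloor>"

end

theory Submission
  imports Defs
begin

(* Let m be the first non-empty column of the fixed point. In a column j > m + 1 the drift
   equations give x_{i+1,j} >= lam d x_{i,j}, and the diagonal equation forces x_{j,j} = 0 once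
   row j is empty to the right of the diagonal; by downward induction on j all mass therefore
   sits in the columns m and m + 1. There the drift equations become linear recursions for the
   prefix sums Z_n, Y_n of z = x_{.,m} and y = x_{.,m+1}: they give z_0 + y_0 = 1 - lam,
   Y_{m+1} + Z_m = (1 + lam d)^m ((1 + lam d) y_0 + z_0) = 1 and z_0 > 0, hence
   (1 + lam d)^m (1 - lam) <= 1 < (1 + lam d)^(m+1) (1 - lam), i.e. m = j*.  The same
   recursions give lam d (L_M - L_S) = lam, and L_M = m + x_{.,m+1} with x_{.,m+1} in [0,1]
   yields the bounds. If all mass sat in column I, the same growth argument would give
   (1 + lam d)^I (1 - lam) <= 1, i.e. I <= j*. *)

lemma sum_lessThan_partial_sums:
  fixes f :: "nat \<Rightarrow> 'a::comm_ring_1"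
  shows "(\<Sum>i<n. \<Sum>k\<le>i. f k) = (\<Sum>k<n. (of_nat n - of_nat k) * f k)"
proof (induction n)
  case (Suc n)
  have "(\<Sum>k<Suc n. (of_nat (Suc n) - of_nat k) * f k)
      = (\<Sum>k<Suc n. (of_nat n - of_nat k) * f k + f k)"
    by (rule sum.cong) (auto simp: algebra_simps)
  also have "\<dots> = (\<Sum>k<n. (of_nat n - of_nat k) * f k) + (\<Sum>k\<le>n. f k)"
    by (simp add: sum.distrib flip: lessThan_Suc_atMost)
  finally show ?case using Suc by simp
qed simp

lemma sum_atMost_partial_sums:
  fixes f :: "nat \<Rightarrow> 'a::comm_ring_1"
  shows "(\<Sum>i<n. \<Sum>k\<le>i. f k) = (\<Sum>k\<le>n. (of_nat n - of_nat k) * f k)"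
proof -
  have "(\<Sum>k\<le>n. g k) = (\<Sum>k<n. g k) + g n" for g :: "nat \<Rightarrow> 'a"
    by (simp flip: lessThan_Suc_atMost)
  then show ?thesis by (simp add: sum_lessThan_partial_sums)
qed

lemma sum_eq_two_terms:
  fixes f :: "'b \<Rightarrow> 'a::comm_monoid_add"
  assumes "finite A" "p \<noteq> q" "\<And>j. j \<in> A \<Longrightarrow> j \<noteq> p \<Longrightarrow> j \<noteq> q \<Longrightarrow> f j = 0"
  shows "sum f A = (if p \<in> A then f p else 0) + (if q \<in> A then f q else 0)"
proof -
  have "sum f A = (\<Sum>j\<in>A. (if j = p then f p else 0) + (if j = q then f q else 0))"
    by (rule sum.cong) (use assms in auto)
  also have "\<dots> = (if p \<in> A then f p else 0) + (if q \<in> A then f q else 0)"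
    using assms(1) by (simp add: sum.distrib)
  finally show ?thesis .
qed

lemma sum_upper_triangle_swap:
  fixes f :: "nat \<Rightarrow> nat \<Rightarrow> 'a::comm_monoid_add"
  shows "(\<Sum>i=0..n. \<Sum>j=i..n. f i j) = (\<Sum>j=0..n. \<Sum>i=0..j. f i j)"
  by (induction n) (simp_all add: atLeastAtMostSuc_conv sum.distrib add_ac)

lemma growing_nonneg_sequence_vanishes:
  fixes f :: "nat \<Rightarrow> 'a::linordered_idom"
  assumes "0 < c" "\<And>i. i < n \<Longrightarrow> c * f i \<le> f (Suc i)" "\<And>i. i \<le> n \<Longrightarrow> 0 \<le> f i" "f n = 0"
    and "i \<le> n"
  shows "f i = 0"
  using assms(5)
proof (induction i rule: inc_induct)
  case (step i)
  then have "c * f i \<le> 0" using assms(2)[of i] by simp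
  then show ?case using assms(1) assms(3)[of i] step.hyps by (simp add: mult_le_0_iff)
qed (rule assms(4))

lemma le_jstar_iff:
  assumes "0 < lam" "lam < 1" "0 < d"
  shows "int n \<le> jstar lam d \<longleftrightarrow> (lam * real d + 1) ^ n * (1 - lam) \<le> 1"
proof -
  let ?q = "lam * real d + 1"
  have q1: "1 < ?q" using assms by simp
  have "int n \<le> jstar lam d \<longleftrightarrow> real n \<le> - ln (1 - lam) / ln ?q"
    unfolding jstar_def by (simp add: le_floor_iff)
  also have "\<dots> \<longleftrightarrow> real n * ln ?q \<le> - ln (1 - lam)"
    by (rule pos_le_divide_eq) (use q1 in simp)
  also have "\<dots> \<longleftrightarrow> ln (?q ^ n * (1 - lam)) \<le> 0"
    using q1 assms by (simp add: ln_mult ln_realpow, linarith)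
  also have "\<dots> \<longleftrightarrow> ?q ^ n * (1 - lam) \<le> 1"
  proof (rule ln_le_zero_iff)
    show "0 < ?q ^ n * (1 - lam)" using q1 assms(2) by simp
  qed
  finally show ?thesis .
qed

lemma jstar_eqI:
  assumes "0 < lam" "lam < 1" "0 < d"
    and "(lam * real d + 1) ^ n * (1 - lam) \<le> 1" "1 < (lam * real d + 1) ^ Suc n * (1 - lam)"
  shows "jstar lam d = int n"
  using assms le_jstar_iff[OF assms(1-3), of n] le_jstar_iff[OF assms(1-3), of "Suc n"] by simp

lemma drift_0_0:
  "drift lam d I x 0 0 = lam * real d * (rowsum I x 0 - x 0 0) - lam + Rf lam d I x 0"
  unfolding drift_def by simp

lemma drift_offdiag: "i < j \<Longrightarrow> drift lam d I x i j =
    x (i+1) j - (if i > 0 then x i j else 0) - lam * real d * x i j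
    - rho lam d I x (j-1) i j
    + (if i > 0 then rho lam d I x (j-2) (i-1) (j-1) else 0)
    + (if j = I \<and> i > 0 then rho lam d I x (I-1) (i-1) I else 0)"
  unfolding drift_def by simp

lemma drift_1_1: "drift lam d I x 1 1 =
    - x 1 1 + lam * real d * (rowsum I x 1 - x 1 1) + lam - Rf lam d I x 0
    - rho lam d I x 0 1 1 - Gf lam d I x 1"
  unfolding drift_def by simp

lemma drift_diag:
  assumes "2 \<le> i" "i < I"
  shows "drift lam d I x i i =
    - x i i + lam * real d * (rowsum I x i - x i i)
    - rho lam d I x (i-1) i i + rho lam d I x (i-2) (i-1) (i-1)
    + Gf lam d I x (i-1) - Gf lam d I x i"
proof -
  have "i \<le> I - 1" using assms(2) by simp
  then show ?thesis using assms(1) unfolding drift_def by simp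
qed

lemma drift_I_I:
  assumes "1 < I"
  shows "drift lam d I x I I =
    - x I I + rho lam d I x (I-2) (I-1) (I-1) + Gf lam d I x (I-1)
    + rho lam d I x (I-1) (I-1) I"
proof -
  have "\<not> I \<le> I - 1" "I \<noteq> 1" using assms by simp_all
  then show ?thesis unfolding drift_def by simp
qed

lemma rho_eq_0_if_colsum_eq_0: "colsum x b = 0 \<Longrightarrow> rho lam d I x k a b = 0"
  unfolding rho_def by simp

lemma LM_minus_LS:
  "LM I x - LS I x = (\<Sum>j=0..I. \<Sum>i=0..j. (real j - real i) * x i j)"
proof -
  have "LS I x = (\<Sum>j=0..I. \<Sum>i=0..j. real i * x i j)"
    unfolding LS_def rowsum_def
    by (simp add: sum_shift_lb_Suc0_0 sum_distrib_left sum_upper_triangle_swap)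
  moreover have "LM I x = (\<Sum>j=0..I. \<Sum>i=0..j. real j * x i j)"
    unfolding LM_def colsum_def
    by (simp add: sum_shift_lb_Suc0_0 sum_distrib_left)
  ultimately show ?thesis by (simp add: left_diff_distrib sum_subtractf)
qed

locale fluid_fixed_point =
  fixes lam :: real and d I :: nat and x :: "nat \<Rightarrow> nat \<Rightarrow> real"
  assumes lam_pos: "0 < lam" and lam_less_1: "lam < 1" and d_ge_2: "2 \<le> d" and I_gt_1: "1 < I"
    and fixed_point: "fixed_point lam d I x"
begin

lemma x_nonneg: "i \<le> j \<Longrightarrow> j \<le> I \<Longrightarrow> 0 \<le> x i j"
  using fixed_point unfolding fixed_point_def inS_def by blast

lemma total_mass: "(\<Sum>i=0..I. rowsum I x i) = 1"
  using fixed_point unfolding fixed_point_def inS_def rowsum_def by blast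

lemma drift_eq_0: "i \<le> j \<Longrightarrow> j \<le> I \<Longrightarrow> drift lam d I x i j = 0"
  using fixed_point unfolding fixed_point_def by blast

lemma lam_d_pos: "0 < lam * real d"
  using lam_pos d_ge_2 by simp

lemma colsum_nonneg: "j \<le> I \<Longrightarrow> 0 \<le> colsum x j"
  unfolding colsum_def by (rule sum_nonneg) (simp add: x_nonneg)

lemma x_eq_0_if_colsum_eq_0:
  assumes "j \<le> I" "colsum x j = 0" "i \<le> j"
  shows "x i j = 0"
proof -
  have "\<forall>k\<in>{0..j}. x k j = 0"
    using assms(1,2) unfolding colsum_def by (subst sum_nonneg_eq_0_iff[symmetric]) (auto intro: x_nonneg)
  then show ?thesis using assms(3) by simp
qed

lemma ex_colsum_neq_0: "\<exists>j\<le>I. colsum x j \<noteq> 0"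
proof (rule ccontr)
  assume "\<not> ?thesis"
  then have "rowsum I x i = 0" if "i \<le> I" for i
    unfolding rowsum_def by (intro sum.neutral) (auto intro: x_eq_0_if_colsum_eq_0)
  then show False using total_mass by simp
qed

definition first_col :: nat where
  "first_col = (LEAST j. j \<le> I \<and> colsum x j \<noteq> 0)"

lemma first_col_le_I: "first_col \<le> I"
  and colsum_first_col_neq_0: "colsum x first_col \<noteq> 0"
  using LeastI_ex[OF ex_colsum_neq_0] unfolding first_col_def by simp_all

lemma colsum_first_col_pos: "0 < colsum x first_col"
  using colsum_first_col_neq_0 colsum_nonneg[OF first_col_le_I] by linarith

lemma colsum_eq_0_below_first_col: "j < first_col \<Longrightarrow> colsum x j = 0"
  using not_less_Least[of j "\<lambda>j. j \<le> I \<and> colsum x j \<noteq> 0"] first_col_le_I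
  unfolding first_col_def by simp

lemma x_eq_0_below_first_col: "j < first_col \<Longrightarrow> i \<le> j \<Longrightarrow> x i j = 0"
  using x_eq_0_if_colsum_eq_0 colsum_eq_0_below_first_col first_col_le_I by simp

lemma cum_colsum_eq_0_iff:
  assumes "k \<le> I"
  shows "(\<Sum>i=0..k. colsum x i) = 0 \<longleftrightarrow> k < first_col"
proof
  assume "k < first_col"
  then show "(\<Sum>i=0..k. colsum x i) = 0"
    by (intro sum.neutral) (auto intro: colsum_eq_0_below_first_col)
next
  assume sum0: "(\<Sum>i=0..k. colsum x i) = 0"
  show "k < first_col"
  proof (rule ccontr)
    assume "\<not> k < first_col"
    then have "colsum x first_col \<le> (\<Sum>i=0..k. colsum x i)"
      using assms by (intro member_le_sum) (auto intro: colsum_nonneg)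
    then show False using sum0 colsum_first_col_pos by simp
  qed
qed

lemma Rf_from_first_col: "first_col \<le> k \<Longrightarrow> k \<le> I \<Longrightarrow> Rf lam d I x k = 0"
  and Gf_from_first_col: "first_col \<le> k \<Longrightarrow> k \<le> I \<Longrightarrow> Gf lam d I x k = 0"
  and rho_from_first_col: "first_col \<le> k \<Longrightarrow> k \<le> I \<Longrightarrow> rho lam d I x k a b = 0"
  unfolding Rf_def Gf_def rho_def using cum_colsum_eq_0_iff by simp_all

lemma Rf_below_first_col: "k < first_col \<Longrightarrow> Rf lam d I x k =
    max 0 (lam * (1 - real d * (\<Sum>i=0..k. (real k + 1 - real i) * rowsum I x i)))"
  and Gf_below_first_col: "k < first_col \<Longrightarrow> Gf lam d I x k =
    (if real d * (\<Sum>i=0..k. (real k + 1 - real i) * rowsum I x i) \<le> 1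
     then lam * real d * (\<Sum>i=0..k. rowsum I x i) else 0)"
  unfolding Rf_def Gf_def using cum_colsum_eq_0_iff first_col_le_I by simp_all

lemma rho_first_col:
  "rho lam d I x k a first_col = Rf lam d I x k * x a first_col / colsum x first_col"
  using colsum_first_col_pos unfolding rho_def by simp

lemma column_vanishes_if_diag_vanishes:
  assumes "first_col + 2 \<le> j" "j \<le> I" "x j j = 0" "i \<le> j"
  shows "x i j = 0"
proof (rule growing_nonneg_sequence_vanishes[where f = "\<lambda>i. x i j"])
  fix i assume "i < j"
  have "rho lam d I x (j-1) i j = 0" "rho lam d I x (j-2) (i-1) (j-1) = 0"
    "rho lam d I x (I-1) (i-1) I = 0"
    using assms by (auto intro: rho_from_first_col)
  then have "x (Suc i) j = (if 0 < i then x i j else 0) + lam * real d * x i j"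
    using drift_eq_0[of i j] drift_offdiag[OF \<open>i < j\<close>, of lam d I x] assms(2) \<open>i < j\<close>
    by (cases "i = 0") (auto split: if_splits)
  then show "lam * real d * x i j \<le> x (Suc i) j"
    using x_nonneg[of i j] \<open>i < j\<close> assms(2) by simp
qed (use lam_d_pos x_nonneg assms in auto)

lemma diag_vanishes_if_row_vanishes:
  assumes "first_col + 2 \<le> j" "j \<le> I" "\<And>k. j < k \<Longrightarrow> k \<le> I \<Longrightarrow> x j k = 0"
  shows "x j j = 0"
proof (cases "j = I")
  case True
  have "rho lam d I x k a b = 0" and "Gf lam d I x k = 0" if "k \<in> {I-2, I-1}" for k a b
    using that assms True by (auto intro: rho_from_first_col Gf_from_first_col)
  then show ?thesis using drift_eq_0[of I I] drift_I_I[OF I_gt_1, of lam d x] True by simp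
next
  case False
  have "rho lam d I x k a b = 0" and "Gf lam d I x k = 0" if "k \<in> {j-2, j-1, j}" for k a b
    using that assms by (auto intro: rho_from_first_col Gf_from_first_col)
  moreover have "rowsum I x j = x j j"
    unfolding rowsum_def using assms by (subst sum.atLeast_Suc_atMost) (auto intro!: sum.neutral)
  ultimately show ?thesis
    using drift_eq_0[of j j] drift_diag[of j I lam d x] assms(1,2) False by simp
qed

lemma x_eq_0_beyond_next_col:
  assumes "first_col + 2 \<le> j" "j \<le> I" "i \<le> j"
  shows "x i j = 0"
  using assms
proof (induction "I - j" arbitrary: i j rule: less_induct)
  case less
  have "x j j = 0"
    using less.prems(1,2) by (rule diag_vanishes_if_row_vanishes) (use less in auto)
  then show ?case using column_vanishes_if_diag_vanishes less.prems by blast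
qed

lemma total_colsum: "(\<Sum>j=0..I. colsum x j) = 1"
  using total_mass unfolding rowsum_def colsum_def by (simp add: sum_upper_triangle_swap)

lemma x_eq_0_outside_first_cols:
  assumes "i \<le> j" "j \<le> I" "j \<noteq> first_col" "j \<noteq> Suc first_col"
  shows "x i j = 0"
proof (cases "j < first_col")
  case True then show ?thesis using x_eq_0_below_first_col assms by simp
next
  case False then show ?thesis using x_eq_0_beyond_next_col assms by simp
qed

lemma sum_over_first_cols:
  fixes F :: "nat \<Rightarrow> real"
  assumes "first_col < I" "\<And>j. j \<le> I \<Longrightarrow> j \<noteq> first_col \<Longrightarrow> j \<noteq> Suc first_col \<Longrightarrow> F j = 0"
  shows "(\<Sum>j=0..I. F j) = F first_col + F (Suc first_col)"
  by (subst sum_eq_two_terms[where p = first_col and q = "Suc first_col"]) (use assms in auto)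

lemma colsum_first_cols:
  assumes "first_col < I"
  shows "colsum x first_col + colsum x (Suc first_col) = 1"
proof -
  have "colsum x j = 0" if "j \<le> I" "j \<noteq> first_col" "j \<noteq> Suc first_col" for j
    unfolding colsum_def using that by (auto intro!: sum.neutral x_eq_0_outside_first_cols)
  then show ?thesis using total_colsum sum_over_first_cols[OF assms] by simp
qed

lemma LM_first_cols:
  assumes "first_col < I"
  shows "LM I x = real first_col + colsum x (Suc first_col)"
proof -
  have "colsum x j = 0" if "j \<le> I" "j \<noteq> first_col" "j \<noteq> Suc first_col" for j
    unfolding colsum_def using that by (auto intro!: sum.neutral x_eq_0_outside_first_cols)
  then have "LM I x = real first_col * colsum x first_col + real (Suc first_col) * colsum x (Suc first_col)"
    unfolding LM_def using sum_over_first_cols[OF assms, of "\<lambda>j. real j * colsum x j"]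
    by (simp add: sum_shift_lb_Suc0_0)
  then have "LM I x = real first_col * (colsum x first_col + colsum x (Suc first_col))
      + colsum x (Suc first_col)"
    by (simp add: algebra_simps)
  then show ?thesis using colsum_first_cols[OF assms] by simp
qed

lemma LM_minus_LS_first_cols:
  assumes "first_col < I"
  shows "LM I x - LS I x =
    (\<Sum>i=0..first_col. (real first_col - real i) * x i first_col)
    + (\<Sum>i=0..Suc first_col. (real (Suc first_col) - real i) * x i (Suc first_col))"
  unfolding LM_minus_LS
  by (rule sum_over_first_cols[OF assms]) (auto intro!: sum.neutral x_eq_0_outside_first_cols)

lemma x_0_1_if_first_col_0:
  assumes "first_col = 0"
  shows "x 0 1 = 1 / real d"
proof -
  have "rowsum I x 0 = x 0 0 + x 0 1"
    unfolding rowsum_def using assms I_gt_1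
    by (subst sum_over_first_cols) (auto intro: x_eq_0_outside_first_cols)
  moreover have "Rf lam d I x 0 = 0" using assms by (simp add: Rf_from_first_col)
  ultimately have "lam * real d * x 0 1 = lam" using drift_eq_0[of 0 0] drift_0_0[of lam d I x] by simp
  then show ?thesis using lam_pos d_ge_2 by (simp add: field_simps)
qed

lemma x_1_1_if_first_col_0:
  assumes "first_col = 0"
  shows "x 1 1 = lam"
proof -
  have "rowsum I x 1 = x 1 1"
    unfolding rowsum_def using assms I_gt_1
    by (subst sum.atLeast_Suc_atMost) (auto intro!: sum.neutral x_eq_0_outside_first_cols)
  moreover have "Rf lam d I x 0 = 0" "rho lam d I x 0 1 1 = 0" "Gf lam d I x 1 = 0"
    using assms I_gt_1 by (simp_all add: Rf_from_first_col rho_from_first_col Gf_from_first_col)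
  ultimately show ?thesis using drift_eq_0[of 1 1] drift_1_1[of lam d I x] I_gt_1 by simp
qed

lemma jstar_eq_0_if_first_col_0:
  assumes "first_col = 0"
  shows "jstar lam d = 0"
proof -
  have "x 0 0 + (x 0 1 + x 1 1) = 1"
    using colsum_first_cols assms I_gt_1 by (simp add: colsum_def)
  moreover have "0 < x 0 0" using colsum_first_col_pos assms by (simp add: colsum_def)
  ultimately have "1 / real d < 1 - lam"
    using x_0_1_if_first_col_0 x_1_1_if_first_col_0 assms by simp
  then have "1 < real d * (1 - lam)" using d_ge_2 by (simp add: field_simps)
  then have "0 < lam * (real d * (1 - lam) - 1)" using lam_pos by simp
  then have "1 < (lam * real d + 1) * (1 - lam)" by (simp add: algebra_simps)
  then show ?thesis using jstar_eqI[of lam d 0] lam_pos lam_less_1 d_ge_2 by simp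
qed

end

locale interior_fixed_point = fluid_fixed_point +
  assumes first_col_pos: "0 < first_col" and first_col_less_I: "first_col < I"
begin

definition z :: "nat \<Rightarrow> real" where "z i = x i first_col"
definition y :: "nat \<Rightarrow> real" where "y i = x i (Suc first_col)"
(* s is the rate at which R_{m-1} moves mass out of column m, per unit of that column's mass;
   d Q is the quantity compared with 1 in R_{m-1} and G_{m-1}. *)
definition s :: real where "s = Rf lam d I x (first_col - 1) / colsum x first_col"
definition Q :: real where "Q = (\<Sum>i<first_col. (\<Sum>k\<le>i. z k) + (\<Sum>k\<le>i. y k))"

lemma z_nonneg: "i \<le> first_col \<Longrightarrow> 0 \<le> z i"
  and y_nonneg: "i \<le> Suc first_col \<Longrightarrow> 0 \<le> y i"
  unfolding z_def y_def using x_nonneg first_col_less_I by simp_all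

lemma colsum_first_col: "colsum x first_col = (\<Sum>k\<le>first_col. z k)"
  and colsum_next_col: "colsum x (Suc first_col) = (\<Sum>k\<le>Suc first_col. y k)"
  unfolding colsum_def z_def y_def by (simp_all add: atLeast0AtMost)

lemma rowsum_interior:
  assumes "i \<le> I"
  shows "rowsum I x i = (if i \<le> first_col then z i else 0) + (if i \<le> Suc first_col then y i else 0)"
  unfolding rowsum_def z_def y_def
  by (subst sum_eq_two_terms[where p = first_col and q = "Suc first_col"])
     (use assms first_col_less_I in \<open>auto intro: x_eq_0_outside_first_cols\<close>)

lemma rho_first_col_eq_s: "rho lam d I x (first_col - 1) i first_col = s * z i"
  unfolding rho_first_col s_def z_def by simp

lemma rho_col_before_first_col: "rho lam d I x k i (first_col - 1) = 0"
  using first_col_pos by (intro rho_eq_0_if_colsum_eq_0 colsum_eq_0_below_first_col) simp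

lemma z_Suc: "i < first_col \<Longrightarrow> z (Suc i) = (lam * real d + s) * (\<Sum>k\<le>i. z k)"
proof (induction i)
  case (Suc i)
  have "drift lam d I x (Suc i) first_col = 0" using Suc.prems first_col_less_I by (simp add: drift_eq_0)
  then have "z (Suc (Suc i)) = z (Suc i) + (lam * real d + s) * z (Suc i)"
    using drift_offdiag[OF Suc.prems, of lam d I x] rho_first_col_eq_s rho_col_before_first_col
      first_col_less_I unfolding z_def by (simp add: algebra_simps)
  then show ?case using Suc by (simp add: algebra_simps)
next
  case 0
  have "drift lam d I x 0 first_col = 0" using first_col_less_I by (simp add: drift_eq_0)
  then show ?case
    using drift_offdiag[OF 0, of lam d I x] rho_first_col_eq_s unfolding z_def by (simp add: algebra_simps)
qed

lemma y_Suc: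
  "i \<le> first_col \<Longrightarrow> y (Suc i) = lam * real d * (\<Sum>k\<le>i. y k) - s * (\<Sum>k<i. z k)"
proof (induction i)
  case 0
  have "drift lam d I x 0 (Suc first_col) = 0" using first_col_less_I by (simp add: drift_eq_0)
  moreover have "rho lam d I x first_col 0 (Suc first_col) = 0"
    using first_col_less_I by (simp add: rho_from_first_col)
  ultimately show ?case using drift_offdiag[of 0 "Suc first_col" lam d I x] unfolding y_def by simp
next
  case (Suc i)
  have "drift lam d I x (Suc i) (Suc first_col) = 0"
    using Suc.prems first_col_less_I by (simp add: drift_eq_0)
  moreover have "rho lam d I x first_col (Suc i) (Suc first_col) = 0"
    "rho lam d I x (I - 1) i I = 0"
    using first_col_less_I by (simp_all add: rho_from_first_col)
  moreover have "Suc first_col - 2 = first_col - 1" using first_col_pos by simp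
  ultimately have "y (Suc (Suc i)) = y (Suc i) + lam * real d * y (Suc i) - s * z i"
    using drift_offdiag[of "Suc i" "Suc first_col" lam d I x] Suc.prems rho_first_col_eq_s
    unfolding y_def by (simp add: algebra_simps split: if_split_asm)
  then show ?case using Suc.IH Suc.prems
    unfolding sum.atMost_Suc sum.lessThan_Suc distrib_left right_diff_distrib by linarith
qed

lemma y_last: "y (Suc first_col) = s * z first_col"
proof (cases "Suc first_col = I")
  case True
  have "rho lam d I x first_col first_col I = 0" "Gf lam d I x first_col = 0"
    using first_col_less_I by (simp_all add: rho_from_first_col Gf_from_first_col)
  moreover have "I - 2 = first_col - 1" "I - 1 = first_col" using True by simp_all
  ultimately show ?thesis
    using drift_eq_0[of I I] drift_I_I[OF I_gt_1, of lam d x] rho_first_col_eq_s True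
    unfolding y_def by simp
next
  case False
  have "rho lam d I x first_col (Suc first_col) (Suc first_col) = 0"
    "Gf lam d I x first_col = 0" "Gf lam d I x (Suc first_col) = 0"
    using first_col_less_I False by (simp_all add: rho_from_first_col Gf_from_first_col)
  moreover have "rowsum I x (Suc first_col) = y (Suc first_col)"
    using rowsum_interior first_col_less_I by simp
  ultimately show ?thesis
    using drift_eq_0[of "Suc first_col" "Suc first_col"] drift_diag[of "Suc first_col" I lam d x]
      rho_first_col_eq_s first_col_pos first_col_less_I False
    unfolding y_def by simp
qed

lemma weighted_rowsum_first_col_pred:
  "(\<Sum>i=0..first_col - 1. (real (first_col - 1) + 1 - real i) * rowsum I x i) = Q"
proof -
  have "{0..first_col - 1} = {..<first_col}" using first_col_pos by auto
  then have "(\<Sum>i=0..first_col - 1. (real (first_col - 1) + 1 - real i) * rowsum I x i)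
      = (\<Sum>i<first_col. (real first_col - real i) * (z i + y i))"
    using first_col_pos first_col_less_I
    by (auto intro!: sum.cong simp: rowsum_interior of_nat_diff)
  also have "\<dots> = Q"
    unfolding Q_def by (simp add: sum_lessThan_partial_sums sum.distrib distrib_left)
  finally show ?thesis .
qed

lemma Rf_first_col_pred: "Rf lam d I x (first_col - 1) = max 0 (lam * (1 - real d * Q))"
  using Rf_below_first_col[of "first_col - 1"] first_col_pos weighted_rowsum_first_col_pred
  by simp

lemma Gf_first_col_pred: "1 < real d * Q \<Longrightarrow> Gf lam d I x (first_col - 1) = 0"
  using Gf_below_first_col[of "first_col - 1"] first_col_pos weighted_rowsum_first_col_pred
  by simp

lemma d_Q_le_1_if_first_col_1:
  assumes "first_col = 1"
  shows "real d * Q \<le> 1"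
proof -
  have "x 0 0 = 0" using x_eq_0_below_first_col assms by simp
  moreover have "rowsum I x 0 = Q" using rowsum_interior assms unfolding Q_def by simp
  ultimately have "lam * real d * Q - lam + Rf lam d I x 0 = 0"
    using drift_eq_0[of 0 0] drift_0_0[of lam d I x] by simp
  then show ?thesis
    using Rf_first_col_pred assms lam_pos by (auto simp: algebra_simps max_def split: if_splits)
qed

(* If d Q > 1 then R_{m-1} = 0: nothing leaves column m, and the recursions empty it. *)
lemma d_Q_le_1_if_first_col_ge_2:
  assumes "2 \<le> first_col"
  shows "real d * Q \<le> 1"
proof (rule ccontr)
  assume "\<not> real d * Q \<le> 1"
  then have s0: "s = 0" and G0: "Gf lam d I x (first_col - 1) = 0"
    using Rf_first_col_pred Gf_first_col_pred lam_pos unfolding s_def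
    by (simp_all add: mult_le_0_iff)
  have "Gf lam d I x first_col = 0" using first_col_less_I by (simp add: Gf_from_first_col)
  then have z_y: "z first_col = lam * real d * y first_col"
    using drift_eq_0[of first_col first_col] drift_diag[of first_col I lam d x] assms
      first_col_less_I rho_first_col_eq_s rho_col_before_first_col rowsum_interior G0 s0
    unfolding z_def y_def by simp
  have "(\<Sum>k\<le>first_col. y k) = 0"
    using y_Suc[of first_col] y_last s0 lam_pos d_ge_2 by simp
  moreover have "y first_col \<le> (\<Sum>k\<le>first_col. y k)"
    by (rule member_le_sum) (auto intro: y_nonneg)
  ultimately have "z first_col = 0" using y_nonneg[of first_col] z_y by simp
  moreover have "z first_col = lam * real d * (\<Sum>k\<le>first_col - 1. z k)"
    using z_Suc[of "first_col - 1"] s0 assms by simp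
  ultimately have "(\<Sum>k\<le>first_col. z k) = 0"
    using lam_pos d_ge_2 assms sum.atMost_Suc[of z "first_col - 1"] by simp
  then show False using colsum_first_col_pos colsum_first_col by simp
qed

lemma d_Q_le_1: "real d * Q \<le> 1"
  using d_Q_le_1_if_first_col_1 d_Q_le_1_if_first_col_ge_2 first_col_pos by linarith

lemma s_mul_colsum: "s * colsum x first_col = lam - lam * real d * Q"
  using Rf_first_col_pred d_Q_le_1 lam_pos colsum_first_col_pos unfolding s_def
  by (simp add: algebra_simps)

lemma partial_mass_first_cols:
  "n \<le> first_col \<Longrightarrow> (\<Sum>k\<le>n. z k) + (\<Sum>k\<le>n. y k)
     = z 0 + y 0 + lam * real d * (\<Sum>i<n. (\<Sum>k\<le>i. z k) + (\<Sum>k\<le>i. y k)) + s * (\<Sum>k<n. z k)"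
proof (induction n)
  case (Suc n)
  then have n: "n < first_col" by simp
  have "s * (\<Sum>k<Suc n. z k) = s * (\<Sum>k\<le>n. z k)" by (simp add: lessThan_Suc_atMost)
  then show ?case
    using Suc.IH[OF less_imp_le[OF n]] z_Suc[OF n] y_Suc[OF less_imp_le[OF n]]
    unfolding sum.atMost_Suc sum.lessThan_Suc[of "\<lambda>i. (\<Sum>k\<le>i. z k) + (\<Sum>k\<le>i. y k)"]
      distrib_left distrib_right right_diff_distrib
    by linarith
qed simp

lemma z_0_plus_y_0: "z 0 + y 0 = 1 - lam"
proof -
  have "1 = (\<Sum>k\<le>first_col. z k) + (\<Sum>k\<le>first_col. y k) + s * z first_col"
    using colsum_first_cols first_col_less_I colsum_first_col colsum_next_col y_last by simp
  also have "\<dots> = z 0 + y 0 + lam * real d * Q + s * colsum x first_col"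
    using partial_mass_first_cols[of first_col] colsum_first_col
    unfolding Q_def by (simp add: sum.atMost_Suc lessThan_Suc_atMost[symmetric] algebra_simps)
  finally show ?thesis using s_mul_colsum by simp
qed

lemma LM_minus_LS_interior: "LM I x - LS I x = 1 / real d"
proof -
  have "LM I x - LS I x = (\<Sum>i<first_col. \<Sum>k\<le>i. z k) + (\<Sum>i<Suc first_col. \<Sum>k\<le>i. y k)"
    using LM_minus_LS_first_cols[OF first_col_less_I]
    by (simp add: sum_atMost_partial_sums atLeast0AtMost z_def y_def)
  then have "LM I x - LS I x = Q + (\<Sum>k\<le>first_col. y k)"
    unfolding Q_def by (simp add: sum.distrib)
  moreover have "lam * real d * (\<Sum>k\<le>first_col. y k) = s * colsum x first_col"
    using y_Suc[of first_col] y_last colsum_first_col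
    by (simp add: lessThan_Suc_atMost[symmetric] algebra_simps)
  ultimately have "lam * (real d * (LM I x - LS I x)) = lam * 1"
    using s_mul_colsum by (simp add: algebra_simps)
  then have "real d * (LM I x - LS I x) = 1" using lam_pos by simp
  then show ?thesis using d_ge_2 by (simp add: field_simps)
qed

lemma z_0_pos: "0 < z 0"
proof -
  have "(\<Sum>k\<le>n. z k) = (1 + lam * real d + s) ^ n * z 0" if "n \<le> first_col" for n
    using that by (induction n) (simp_all add: z_Suc algebra_simps)
  then have "z 0 \<noteq> 0" using colsum_first_col_pos colsum_first_col by force
  then show ?thesis using z_nonneg[of 0] by simp
qed

lemma shifted_partial_sums_first_cols:
  "n \<le> first_col \<Longrightarrow> (\<Sum>k\<le>Suc n. y k) + (\<Sum>k\<le>n. z k)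
     = (1 + lam * real d) ^ n * ((1 + lam * real d) * y 0 + z 0)"
proof (induction n)
  case (Suc n)
  have "(\<Sum>k\<le>Suc (Suc n). y k) + (\<Sum>k\<le>Suc n. z k)
      = (1 + lam * real d) * ((\<Sum>k\<le>Suc n. y k) + (\<Sum>k\<le>n. z k))"
    using Suc.prems y_Suc[of "Suc n"] z_Suc[of n] by (simp add: lessThan_Suc_atMost algebra_simps)
  then show ?case using Suc by simp
qed (simp add: y_Suc algebra_simps)

lemma jstar_eq_first_col_interior: "jstar lam d = int first_col"
proof (rule jstar_eqI[OF lam_pos lam_less_1])
  let ?q = "1 + lam * real d"
  have one: "1 = ?q ^ first_col * (?q * y 0 + z 0)"
    using shifted_partial_sums_first_cols[of first_col] colsum_first_cols[OF first_col_less_I]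
      colsum_first_col colsum_next_col by simp
  have "0 \<le> lam * real d * y 0" using lam_d_pos y_nonneg[of 0] by simp
  then have "1 - lam \<le> ?q * y 0 + z 0" using z_0_plus_y_0 by (simp add: distrib_right)
  then have "?q ^ first_col * (1 - lam) \<le> ?q ^ first_col * (?q * y 0 + z 0)"
    using lam_d_pos by (intro mult_left_mono) auto
  then show "(lam * real d + 1) ^ first_col * (1 - lam) \<le> 1" using one by (simp add: add.commute)
  have "?q ^ Suc first_col * (1 - lam) = ?q ^ Suc first_col * (y 0 + z 0)"
    using z_0_plus_y_0 by (simp add: add.commute)
  also have "\<dots> = ?q ^ first_col * (?q * y 0 + z 0) + ?q ^ first_col * (lam * real d * z 0)"
    by (simp add: algebra_simps)
  finally have "?q ^ Suc first_col * (1 - lam) = 1 + ?q ^ first_col * (lam * real d * z 0)"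
    using one by simp
  moreover have "0 < ?q ^ first_col * (lam * real d * z 0)" using lam_d_pos z_0_pos by simp
  ultimately show "1 < (lam * real d + 1) ^ Suc first_col * (1 - lam)" by (simp add: add.commute)
qed (use d_ge_2 in simp)

end

locale last_col_fixed_point = fluid_fixed_point +
  assumes first_col_eq_I: "first_col = I"
begin

definition z :: "nat \<Rightarrow> real" where "z i = x i I"
definition s :: real where "s = Rf lam d I x (I - 1) / colsum x I"
definition Q :: real where "Q = (\<Sum>i<I. \<Sum>k\<le>i. z k)"

lemma z_nonneg: "i \<le> I \<Longrightarrow> 0 \<le> z i"
  unfolding z_def by (simp add: x_nonneg)

lemma rowsum_last_col: "i \<le> I \<Longrightarrow> rowsum I x i = z i"
  unfolding rowsum_def z_def using first_col_eq_I
  by (subst sum_eq_two_terms[where p = I and q = "Suc I"]) (auto intro: x_eq_0_below_first_col)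

lemma mass_last_col: "(\<Sum>k\<le>I. z k) = 1"
  using total_mass rowsum_last_col by (simp add: atLeast0AtMost)

lemma colsum_last_col: "colsum x I = 1"
  using mass_last_col unfolding colsum_def z_def by (simp add: atLeast0AtMost)

lemma rho_last_col_eq_s: "rho lam d I x (I - 1) i I = s * z i"
  using rho_first_col[of "I - 1" i] first_col_eq_I unfolding s_def z_def by simp

lemma rho_col_before_last_col: "rho lam d I x k i (I - 1) = 0"
  using first_col_eq_I I_gt_1 by (intro rho_eq_0_if_colsum_eq_0 colsum_eq_0_below_first_col) simp

lemma z_Suc: "i < I \<Longrightarrow> z (Suc i) = lam * real d * (\<Sum>k\<le>i. z k) + s * z i"
proof (induction i)
  case 0
  then show ?case
    using drift_eq_0[of 0 I] drift_offdiag[OF 0, of lam d I x] rho_last_col_eq_s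
    unfolding z_def by (simp add: algebra_simps)
next
  case (Suc i)
  have "z (Suc (Suc i)) = z (Suc i) + (lam * real d + s) * z (Suc i) - s * z i"
    using drift_eq_0[of "Suc i" I] drift_offdiag[OF Suc.prems, of lam d I x] Suc.prems
      rho_last_col_eq_s rho_col_before_last_col unfolding z_def by (simp add: algebra_simps)
  then show ?case using Suc.IH Suc.prems
    unfolding sum.atMost_Suc distrib_left distrib_right by linarith
qed

lemma weighted_rowsum_I_pred:
  "(\<Sum>i=0..I - 1. (real (I - 1) + 1 - real i) * rowsum I x i) = Q"
proof -
  have "{0..I - 1} = {..<I}" using I_gt_1 by auto
  then show ?thesis
    unfolding Q_def sum_lessThan_partial_sums using I_gt_1
    by (auto intro!: sum.cong simp: rowsum_last_col of_nat_diff)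
qed

lemma d_Q_le_1: "real d * Q \<le> 1"
proof (rule ccontr)
  assume "\<not> real d * Q \<le> 1"
  then have s0: "s = 0" and G0: "Gf lam d I x (I - 1) = 0"
    using Rf_below_first_col[of "I - 1"] Gf_below_first_col[of "I - 1"]
      weighted_rowsum_I_pred first_col_eq_I I_gt_1 lam_pos
    unfolding s_def by (simp_all add: mult_le_0_iff)
  then have "z I = 0"
    using drift_eq_0[of I I] drift_I_I[OF I_gt_1, of lam d x] rho_last_col_eq_s rho_col_before_last_col
    unfolding z_def by simp
  moreover have "z I = lam * real d * (\<Sum>k\<le>I - 1. z k)"
    using z_Suc[of "I - 1"] s0 I_gt_1 by simp
  ultimately have "(\<Sum>k\<le>I. z k) = 0"
    using lam_pos d_ge_2 I_gt_1 sum.atMost_Suc[of z "I - 1"] by simp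
  then show False using mass_last_col by simp
qed

lemma s_eq_lam_minus_lam_d_Q: "s = lam - lam * real d * Q"
  using Rf_below_first_col[of "I - 1"] weighted_rowsum_I_pred first_col_eq_I I_gt_1
    d_Q_le_1 lam_pos colsum_last_col
  unfolding s_def by (simp add: algebra_simps)

lemma s_nonneg: "0 \<le> s"
  using colsum_last_col unfolding s_def Rf_def by simp

lemma one_minus_lam_le_z_0: "1 - lam \<le> z 0"
proof -
  have partial: "(\<Sum>k\<le>n. z k) = z 0 + lam * real d * (\<Sum>i<n. \<Sum>k\<le>i. z k) + s * (\<Sum>k<n. z k)"
    if "n \<le> I" for n
    using that by (induction n) (simp_all add: z_Suc algebra_simps)
  have "(\<Sum>k<I. z k) \<le> 1"
    using mass_last_col z_nonneg[of I] by (simp flip: lessThan_Suc_atMost)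
  then have "s * (\<Sum>k<I. z k) \<le> s" using s_nonneg by (simp add: mult_left_le)
  then show ?thesis using partial[of I] mass_last_col s_eq_lam_minus_lam_d_Q unfolding Q_def by simp
qed

lemma power_bound_last_col: "(lam * real d + 1) ^ I * (1 - lam) \<le> 1"
proof -
  have "(lam * real d + 1) ^ n * z 0 \<le> (\<Sum>k\<le>n. z k)" if "n \<le> I" for n
    using that
  proof (induction n)
    case (Suc n)
    have "(\<Sum>k\<le>Suc n. z k) = (lam * real d + 1) * (\<Sum>k\<le>n. z k) + s * z n"
      using z_Suc[of n] Suc.prems by (simp add: algebra_simps)
    moreover have "0 \<le> s * z n" using s_nonneg z_nonneg Suc.prems by simp
    moreover have "(lam * real d + 1) * ((lam * real d + 1) ^ n * z 0)
        \<le> (lam * real d + 1) * (\<Sum>k\<le>n. z k)"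
      using Suc lam_d_pos by (intro mult_left_mono) auto
    ultimately show ?case by simp
  qed simp
  from this[of I] have "(lam * real d + 1) ^ I * z 0 \<le> 1" using mass_last_col by simp
  moreover have "(lam * real d + 1) ^ I * (1 - lam) \<le> (lam * real d + 1) ^ I * z 0"
    using one_minus_lam_le_z_0 lam_d_pos by (intro mult_left_mono) auto
  ultimately show ?thesis by linarith
qed

end

context fluid_fixed_point
begin

lemma first_col_less_I_if_jstar_less:
  assumes "jstar lam d < int I"
  shows "first_col < I"
proof (rule ccontr)
  assume "\<not> first_col < I"
  then interpret last_col_fixed_point lam d I x
    using first_col_le_I by unfold_locales simp
  have "int I \<le> jstar lam d"
    using power_bound_last_col le_jstar_iff lam_pos lam_less_1 d_ge_2 by simp
  then show False using assms by simp
qed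

lemma jstar_eq_first_col:
  assumes "first_col < I"
  shows "jstar lam d = int first_col"
proof (cases "first_col = 0")
  case True
  then show ?thesis using jstar_eq_0_if_first_col_0 by simp
next
  case False
  then interpret interior_fixed_point lam d I x
    using assms by unfold_locales simp_all
  show ?thesis by (rule jstar_eq_first_col_interior)
qed

lemma LM_eq_LS_plus_inverse_d:
  assumes "first_col < I"
  shows "LM I x = LS I x + 1 / real d"
proof (cases "first_col = 0")
  case True
  then show ?thesis
    using LM_minus_LS_first_cols[OF assms] x_0_1_if_first_col_0 by simp
next
  case False
  then interpret interior_fixed_point lam d I x
    using assms by unfold_locales simp_all
  show ?thesis using LM_minus_LS_interior by simp
qed

end

theorem proposition2:
  fixes lam :: real and d I :: nat and x :: "nat \<Rightarrow> nat \<Rightarrow> real"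
  assumes "0 < lam" and "lam < 1" and "2 \<le> d" and "1 < I"
    and "jstar lam d < int I"
    and "fixed_point lam d I x"
  shows "LM I x = LS I x + 1 / real d
         \<and> real_of_int (jstar lam d) - 1 / real d \<le> LS I x
         \<and> LS I x \<le> real_of_int (jstar lam d) - 1 / real d + 1"
proof -
  interpret fluid_fixed_point lam d I x
    using assms(1-4,6) by unfold_locales
  have m: "first_col < I" using assms(5) by (rule first_col_less_I_if_jstar_less)
  have "0 \<le> colsum x (Suc first_col)" "colsum x (Suc first_col) \<le> 1"
    using colsum_nonneg[of "Suc first_col"] colsum_first_cols[OF m] colsum_first_col_pos m by simp_all
  then show ?thesis
    using LM_eq_LS_plus_inverse_d[OF m] jstar_eq_first_col[OF m] LM_first_cols[OF m] by simp
qed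

end
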